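(* Let \(G\) be a connected split graph and \(T\) a spanning tree of \(G\). Then \(T\) is the \(\mathcal{F}\)-tree of some BFS ordering of \(G\) if and only if \(T\) is the \(\mathcal{F}\)-tree of some MNS ordering of \(G\). The same equivalence holds with MNS replaced by MCS, by LBFS, and by LDFS, respectively.
   Context: A split graph is a graph whose vertex set can be partitioned into a clique and an independent set. A BFS ordering is a vertex ordering produced by breadth first search (vertices are visited from a start vertex using a queue of discovered but unvisited vertices). With \(n=|V|\): an LBFS ordering is produced by starting with label \((n)\) on a start vertex \(s\), empty labels elsewhere, and for \(i=1,\dots,n\) picking an unnumbered vertex of lexicographically largest label as \(v_i\) and appending \(n-i\) to the labels of its unnumbered neighbors. An LDFS ordering is produced similarly with \(s\) labelled \((0)\), others empty, and prepending \(i\) instead of appending \(n-i\). An MCS ordering is produced by repeatedly choosing an unnumbered vertex with the most numbered neighbors. An MNS ordering is produced with set labels: all labels \(\emptyset\), \(s\) gets \(\{n+1\}\); repeatedly pick an unnumbered vertex whose label is inclusion-maximal, make it \(v_i\), and add \(i\) to the labels of its unnumbered neighbors. Ties are broken arbitrarily in all searches. The \(\mathcal{F}\)-tree of an ordering \(\sigma=(v_1,\dots,v_n)\) is the tree on \(V\) with, for each \(v\neq v_1\), an edge from \(v\) to its leftmost neighbor in \(\sigma\). *)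

theory Defs
  imports Main
begin

definition graph :: "'a set \<Rightarrow> 'a set set \<Rightarrow> bool" where
  "graph V E \<longleftrightarrow> finite V \<and> (\<forall>e\<in>E. \<exists>u v. u \<noteq> v \<and> u \<in> V \<and> v \<in> V \<and> e = {u, v})"

definition adj :: "'a set set \<Rightarrow> 'a \<Rightarrow> 'a \<Rightarrow> bool" where
  "adj E u v \<longleftrightarrow> {u, v} \<in> E"

definition is_walk :: "'a set \<Rightarrow> 'a set set \<Rightarrow> 'a list \<Rightarrow> bool" where
  "is_walk V E p \<longleftrightarrow> p \<noteq> [] \<and> set p \<subseteq> V \<and> (\<forall>i. i + 1 < length p \<longrightarrow> adj E (p ! i) (p ! (i + 1)))"

definition connected_graph :: "'a set \<Rightarrow> 'a set set \<Rightarrow> bool" where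
  "connected_graph V E \<longleftrightarrow> graph V E \<and> V \<noteq> {} \<and>
     (\<forall>u\<in>V. \<forall>v\<in>V. \<exists>p. is_walk V E p \<and> hd p = u \<and> last p = v)"

definition is_cycle :: "'a set \<Rightarrow> 'a set set \<Rightarrow> 'a list \<Rightarrow> bool" where
  "is_cycle V E c \<longleftrightarrow> is_walk V E c \<and> distinct c \<and> length c \<ge> 3 \<and> adj E (last c) (hd c)"

definition is_tree :: "'a set \<Rightarrow> 'a set set \<Rightarrow> bool" where
  "is_tree V T \<longleftrightarrow> connected_graph V T \<and> (\<nexists>c. is_cycle V T c)"

definition spanning_tree :: "'a set \<Rightarrow> 'a set set \<Rightarrow> 'a set set \<Rightarrow> bool" where
  "spanning_tree V E T \<longleftrightarrow> T \<subseteq> E \<and> is_tree V T"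

definition clique :: "'a set set \<Rightarrow> 'a set \<Rightarrow> bool" where
  "clique E K \<longleftrightarrow> (\<forall>u\<in>K. \<forall>v\<in>K. u \<noteq> v \<longrightarrow> adj E u v)"

definition independent :: "'a set set \<Rightarrow> 'a set \<Rightarrow> bool" where
  "independent E I \<longleftrightarrow> (\<forall>u\<in>I. \<forall>v\<in>I. \<not> adj E u v)"

definition split_graph :: "'a set \<Rightarrow> 'a set set \<Rightarrow> bool" where
  "split_graph V E \<longleftrightarrow> graph V E \<and>
     (\<exists>K I. K \<union> I = V \<and> K \<inter> I = {} \<and> clique E K \<and> independent E I)"

text \<open>Vertex orderings: lists enumerating V without repetition; sigma ! (i-1) is v_i.\<close>

definition ordering :: "'a set \<Rightarrow> 'a list \<Rightarrow> bool" where
  "ordering V \<sigma> \<longleftrightarrow> distinct \<sigma> \<and> set \<sigma> = V"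

text \<open>BFS: executions with a queue of discovered but unvisited vertices.
  State (visited list, queue).\<close>

inductive bfs_run :: "'a set \<Rightarrow> 'a set set \<Rightarrow> 'a list \<Rightarrow> 'a list \<Rightarrow> bool"
  for V E where
  start: "s \<in> V \<Longrightarrow> bfs_run V E [] [s]"
| step: "bfs_run V E \<sigma> (v # Q) \<Longrightarrow> distinct N \<Longrightarrow>
     set N = {w \<in> V. adj E v w \<and> w \<notin> set \<sigma> \<and> w \<notin> set (v # Q)} \<Longrightarrow>
     bfs_run V E (\<sigma> @ [v]) (Q @ N)"

definition bfs_ordering :: "'a set \<Rightarrow> 'a set set \<Rightarrow> 'a list \<Rightarrow> bool" where
  "bfs_ordering V E \<sigma> \<longleftrightarrow> ordering V \<sigma> \<and> bfs_run V E \<sigma> []"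

text \<open>Generic label-based search: v_i must be an unnumbered vertex such that no
  unnumbered vertex is strictly better, where "better u w p" means that u is
  strictly preferred to w after the prefix p = (v_1, ..., v_(i-1)) is numbered.\<close>

definition search_ordering ::
  "'a set \<Rightarrow> ('a list \<Rightarrow> 'a \<Rightarrow> 'a \<Rightarrow> bool) \<Rightarrow> 'a list \<Rightarrow> bool" where
  "search_ordering V better \<sigma> \<longleftrightarrow> ordering V \<sigma> \<and>
     (\<forall>i < length \<sigma>. \<forall>u \<in> V - set (take i \<sigma>). \<not> better (take i \<sigma>) u (\<sigma> ! i))"

definition lex_less :: "nat list \<Rightarrow> nat list \<Rightarrow> bool" where
  "lex_less xs ys \<longleftrightarrow> (xs, ys) \<in> lexord {(a, b). a < b}"

definition lbfs_label :: "'a set set \<Rightarrow> nat \<Rightarrow> 'a \<Rightarrow> 'a list \<Rightarrow> 'a \<Rightarrow> nat list" where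
  "lbfs_label E n s p u =
     (if u = s then [n] else []) @ [n - (j + 1). j \<leftarrow> [0..<length p], adj E (p ! j) u]"

definition lbfs_ordering :: "'a set \<Rightarrow> 'a set set \<Rightarrow> 'a list \<Rightarrow> bool" where
  "lbfs_ordering V E \<sigma> \<longleftrightarrow> (\<exists>s\<in>V. search_ordering V
     (\<lambda>p u w. lex_less (lbfs_label E (card V) s p w) (lbfs_label E (card V) s p u)) \<sigma>)"

definition ldfs_label :: "'a set set \<Rightarrow> 'a \<Rightarrow> 'a list \<Rightarrow> 'a \<Rightarrow> nat list" where
  "ldfs_label E s p u =
     [j + 1. j \<leftarrow> rev [0..<length p], adj E (p ! j) u] @ (if u = s then [0] else [])"

definition ldfs_ordering :: "'a set \<Rightarrow> 'a set set \<Rightarrow> 'a list \<Rightarrow> bool" where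
  "ldfs_ordering V E \<sigma> \<longleftrightarrow> (\<exists>s\<in>V. search_ordering V
     (\<lambda>p u w. lex_less (ldfs_label E s p w) (ldfs_label E s p u)) \<sigma>)"

definition mcs_count :: "'a set set \<Rightarrow> 'a list \<Rightarrow> 'a \<Rightarrow> nat" where
  "mcs_count E p u = card {j. j < length p \<and> adj E (p ! j) u}"

definition mcs_ordering :: "'a set \<Rightarrow> 'a set set \<Rightarrow> 'a list \<Rightarrow> bool" where
  "mcs_ordering V E \<sigma> \<longleftrightarrow> search_ordering V
     (\<lambda>p u w. mcs_count E p w < mcs_count E p u) \<sigma>"

definition mns_label :: "'a set set \<Rightarrow> nat \<Rightarrow> 'a \<Rightarrow> 'a list \<Rightarrow> 'a \<Rightarrow> nat set" where
  "mns_label E n s p u =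
     (if u = s then {n + 1} else {}) \<union> {j + 1 | j. j < length p \<and> adj E (p ! j) u}"

definition mns_ordering :: "'a set \<Rightarrow> 'a set set \<Rightarrow> 'a list \<Rightarrow> bool" where
  "mns_ordering V E \<sigma> \<longleftrightarrow> (\<exists>s\<in>V. search_ordering V
     (\<lambda>p u w. mns_label E (card V) s p w \<subset> mns_label E (card V) s p u) \<sigma>)"

definition F_tree :: "'a set set \<Rightarrow> 'a list \<Rightarrow> 'a set set" where
  "F_tree E \<sigma> = {{\<sigma> ! i, \<sigma> ! (LEAST j. j < length \<sigma> \<and> adj E (\<sigma> ! j) (\<sigma> ! i))} | i.
                   0 < i \<and> i < length \<sigma>}"

end

theory Submission
  imports Defs
begin

text \<open>Fix a split partition \<open>V = K \<union> I\<close> and a start vertex \<open>s\<close>. In a BFS ordering, and in any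
  MNS, MCS, LBFS or LDFS ordering, the leftmost neighbour of every vertex \<open>v \<noteq> s\<close> lies in
  \<open>{s} \<union> K\<close>: an independent vertex only sees \<open>K\<close>, and when \<open>s \<in> I\<close> the second vertex is a
  clique neighbour of \<open>s\<close>, which sees all of \<open>K\<close>. So the F-tree only depends on \<open>s\<close> and on the
  order in which \<open>K - {s}\<close> is visited. BFS and the four searches realise the same such orders:
  all of them if \<open>s \<in> K\<close>, and exactly those listing the neighbours of \<open>s\<close> first if \<open>s \<in> I\<close>.
  For the searches this is because each of them strictly prefers a vertex whose set of numbered
  neighbours strictly contains that of another, and never prefers one whose set is contained
  in that of another.\<close>

lemma lex_less_irrefl: "\<not> lex_less xs xs"
  unfolding lex_less_def by (rule lexord_irreflexive) simp

lemma lex_less_trans: "lex_less xs ys \<Longrightarrow> lex_less ys zs \<Longrightarrow> lex_less xs zs"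
  unfolding lex_less_def by (rule lexord_trans) (auto simp: trans_def)

lemma lex_less_map_filter:
  assumes "sorted_wrt (\<lambda>a b. f b < f a) xs"
    and "\<forall>j\<in>set xs. A j \<longrightarrow> B j" and "\<exists>j\<in>set xs. B j \<and> \<not> A j"
  shows "lex_less (map f (filter A xs)) (map f (filter B xs))"
  using assms
proof (induction xs)
  case Nil
  then show ?case by simp
next
  case (Cons x xs)
  show ?case
  proof (cases "B x \<and> \<not> A x")
    case True
    have "\<forall>y\<in>set (filter A xs). f y < f x" using Cons.prems(1) by auto
    then show ?thesis using True by (cases "filter A xs") (simp_all add: lex_less_def)
  next
    case False
    then have "lex_less (map f (filter A xs)) (map f (filter B xs))"
      using Cons by auto
    then show ?thesis using False Cons.prems(2) by (auto simp: lex_less_def)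
  qed
qed

lemma not_lex_less_map_filter:
  assumes "sorted_wrt (\<lambda>a b. f b < f a) xs" and "\<forall>j\<in>set xs. A j \<longrightarrow> B j"
  shows "\<not> lex_less (map f (filter B xs)) (map f (filter A xs))"
proof (cases "\<exists>j\<in>set xs. B j \<and> \<not> A j")
  case True
  have "asym (lexord {(a, b). (a::nat) < b})"
    by (rule lexord_asym) (auto intro: asymI)
  then show ?thesis
    using lex_less_map_filter[OF assms True] unfolding lex_less_def by (auto dest: asymD)
next
  case False
  then have "filter B xs = filter A xs" using assms(2) by (auto intro: filter_cong)
  then show ?thesis by (simp add: lex_less_irrefl)
qed

lemma concat_map_if_singleton:
  "concat (map (\<lambda>j. if P j then [f j] else []) xs) = map f (filter P xs)"
  by (induction xs) auto

lemma nth_Least_eq_hd_filter: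
  "\<exists>j<length xs. P (xs ! j) \<Longrightarrow> xs ! (LEAST j. j < length xs \<and> P (xs ! j)) = hd (filter P xs)"
proof (induction xs)
  case Nil
  then show ?case by simp
next
  case (Cons x xs)
  show ?case
  proof (cases "P x")
    case True
    have "(LEAST j. j < length (x # xs) \<and> P ((x # xs) ! j)) = 0"
      by (rule Least_equality) (use True in auto)
    then show ?thesis using True by simp
  next
    case False
    obtain j where j: "j < length (x # xs)" "P ((x # xs) ! j)" using Cons.prems by blast
    have "(LEAST j. j < length (x # xs) \<and> P ((x # xs) ! j))
        = Suc (LEAST j. Suc j < length (x # xs) \<and> P ((x # xs) ! Suc j))"
      by (rule Least_Suc[where P="\<lambda>j. j < length (x # xs) \<and> P ((x # xs) ! j)", OF conjI[OF j]])
        (use False in simp)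
    moreover have "\<exists>j<length xs. P (xs ! j)"
      using j False by (cases j) auto
    ultimately show ?thesis using Cons.IH False by simp
  qed
qed

lemma hd_filter_filter:
  "\<exists>x\<in>set xs. P x \<Longrightarrow> Q (hd (filter P xs)) \<Longrightarrow> hd (filter P (filter Q xs)) = hd (filter P xs)"
  by (induction xs) (auto, blast+)

definition front_loaded :: "('a \<Rightarrow> bool) \<Rightarrow> 'a list \<Rightarrow> bool" where
  "front_loaded P xs \<longleftrightarrow> xs = filter P xs @ filter (\<lambda>x. \<not> P x) xs"

lemma front_loaded_append:
  "\<forall>x\<in>set ys. P x \<Longrightarrow> \<forall>x\<in>set zs. \<not> P x \<Longrightarrow> front_loaded P (ys @ zs)"
  by (simp add: front_loaded_def filter_id_conv filter_empty_conv)

lemma front_loaded_filter: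
  assumes "front_loaded P xs"
  shows "front_loaded P (filter Q xs)"
proof -
  have "filter Q xs = filter Q (filter P xs @ filter (\<lambda>x. \<not> P x) xs)"
    using assms unfolding front_loaded_def by (rule arg_cong)
  then have eq: "filter Q xs = filter Q (filter P xs) @ filter Q (filter (\<lambda>x. \<not> P x) xs)"
    by (simp only: filter_append)
  have "front_loaded P (filter Q (filter P xs) @ filter Q (filter (\<lambda>x. \<not> P x) xs))"
    by (rule front_loaded_append) auto
  then show ?thesis by (simp only: eq)
qed

lemma front_loaded_hd:
  assumes "front_loaded P xs" and "\<exists>x\<in>set xs. P x"
  shows "P (hd xs)"
proof -
  have ne: "filter P xs \<noteq> []" using assms(2) by (simp add: filter_empty_conv)
  have "hd xs = hd (filter P xs @ filter (\<lambda>x. \<not> P x) xs)"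
    using assms(1) unfolding front_loaded_def by (rule arg_cong)
  also have "\<dots> = hd (filter P xs)" using ne by simp
  finally show ?thesis using hd_in_set[OF ne] by simp
qed

lemma front_loaded_nth:
  assumes "front_loaded P xs" "i < j" "j < length xs" "P (xs ! j)"
  shows "P (xs ! i)"
proof -
  define ys zs where "ys = filter P xs" and "zs = filter (\<lambda>x. \<not> P x) xs"
  have xs: "xs = ys @ zs" using assms(1) unfolding front_loaded_def ys_def zs_def .
  have "j < length ys"
  proof (rule ccontr)
    assume "\<not> j < length ys"
    then have "xs ! j \<in> set zs" using assms(3) unfolding xs by (simp add: nth_append)
    then show False using assms(4) unfolding zs_def by simp
  qed
  then have "xs ! i \<in> set ys" using assms(2) unfolding xs by (simp add: nth_append)
  then show ?thesis unfolding ys_def by simp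
qed

lemma front_loaded_if_nth:
  assumes "\<And>i j. i < j \<Longrightarrow> j < length xs \<Longrightarrow> P (xs ! j) \<Longrightarrow> P (xs ! i)"
  shows "front_loaded P xs"
  using assms
proof (induction xs)
  case Nil
  then show ?case by (simp add: front_loaded_def)
next
  case (Cons x xs)
  show ?case
  proof (cases "P x")
    case True
    have "front_loaded P xs"
    proof (rule Cons.IH)
      fix i j assume "i < j" "j < length xs" "P (xs ! j)"
      then show "P (xs ! i)" using Cons.prems[of "Suc i" "Suc j"] by simp
    qed
    then have "x # xs = x # (filter P xs @ filter (\<lambda>x. \<not> P x) xs)"
      unfolding front_loaded_def by (rule arg_cong)
    also have "\<dots> = filter P (x # xs) @ filter (\<lambda>x. \<not> P x) (x # xs)"
      using True by simp
    finally show ?thesis unfolding front_loaded_def .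
  next
    case False
    have nP: "\<not> P y" if y: "y \<in> set xs" for y
    proof -
      obtain j where "j < length xs" "xs ! j = y" using y by (auto simp: in_set_conv_nth)
      then show ?thesis using Cons.prems[of 0 "Suc j"] False by auto
    qed
    have "filter P xs = []" using nP by (auto simp: filter_empty_conv)
    moreover have "filter (\<lambda>x. \<not> P x) xs = xs" using nP by (auto simp: filter_id_conv)
    ultimately show ?thesis using False unfolding front_loaded_def by simp
  qed
qed

section \<open>Search orderings\<close>

lemma finite_strict_order_has_maximal:
  assumes "finite S" "S \<noteq> {}" "\<And>x. \<not> R x x" "\<And>x y z. R x y \<Longrightarrow> R y z \<Longrightarrow> R x z"
  shows "\<exists>m\<in>S. \<forall>u\<in>S. \<not> R u m"
  using assms(1,2)
proof (induction S rule: finite_ne_induct)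
  case (singleton x)
  then show ?case using assms(3) by auto
next
  case (insert x S)
  then obtain m where m: "m \<in> S" "\<forall>u\<in>S. \<not> R u m" by blast
  show ?case
  proof (cases "R x m")
    case True
    then have "\<forall>u\<in>insert x S. \<not> R u x" using m assms(3,4) by blast
    then show ?thesis by blast
  next
    case False
    then show ?thesis using m by blast
  qed
qed

definition search_prefix :: "'a set \<Rightarrow> ('a list \<Rightarrow> 'a \<Rightarrow> 'a \<Rightarrow> bool) \<Rightarrow> 'a list \<Rightarrow> bool" where
  "search_prefix V better P \<longleftrightarrow> distinct P \<and> set P \<subseteq> V \<and>
     (\<forall>i < length P. \<forall>u \<in> V - set (take i P). \<not> better (take i P) u (P ! i))"

lemma search_ordering_iff_prefix:
  "search_ordering V better \<sigma> \<longleftrightarrow> search_prefix V better \<sigma> \<and> set \<sigma> = V"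
  by (auto simp: search_ordering_def search_prefix_def ordering_def)

lemma search_prefix_snoc:
  assumes "search_prefix V better P" "m \<in> V - set P" "\<forall>u\<in>V - set P. \<not> better P u m"
  shows "search_prefix V better (P @ [m])"
  using assms by (auto simp: search_prefix_def nth_append less_Suc_eq)

lemma search_prefix_extends:
  assumes "finite V" and "\<And>p u. \<not> better p u u"
    and "\<And>p u v w. better p u v \<Longrightarrow> better p v w \<Longrightarrow> better p u w"
    and "search_prefix V better P"
  shows "\<exists>ys. search_ordering V better (P @ ys)"
  using assms(4)
proof (induction "card (V - set P)" arbitrary: P rule: less_induct)
  case less
  show ?case
  proof (cases "V - set P = {}")
    case True
    then show ?thesis using less.prems
      by (intro exI[of _ "[]"]) (auto simp: search_ordering_iff_prefix search_prefix_def)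
  next
    case False
    obtain m where m: "m \<in> V - set P" "\<forall>u\<in>V - set P. \<not> better P u m"
      using finite_strict_order_has_maximal[of "V - set P" "better P"] False assms(1-3) by blast
    have "V - set (P @ [m]) = (V - set P) - {m}" by auto
    then have "card (V - set (P @ [m])) < card (V - set P)"
      using m assms(1) by (metis card_Diff1_less finite_Diff)
    then obtain ys where "search_ordering V better ((P @ [m]) @ ys)"
      using less.hyps search_prefix_snoc[OF less.prems m] by blast
    then show ?thesis by (intro exI[of _ "m # ys"]) simp
  qed
qed

lemma search_ordering_hd:
  assumes "search_ordering V better \<sigma>" "s \<in> V" "\<And>u. u \<noteq> s \<Longrightarrow> better [] s u"
  shows "hd \<sigma> = s"
proof -
  have "\<sigma> \<noteq> []" using assms(1,2) unfolding search_ordering_def ordering_def by auto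
  moreover have "\<not> better [] s (\<sigma> ! 0)"
    using assms(1,2) calculation unfolding search_ordering_def by auto
  ultimately show ?thesis using assms(3) by (auto simp: hd_conv_nth)
qed

section \<open>Connected graphs and breadth-first search\<close>

definition leftmost_nbr :: "'a set set \<Rightarrow> 'a list \<Rightarrow> 'a \<Rightarrow> 'a" where
  "leftmost_nbr E \<sigma> v = hd (filter (\<lambda>x. adj E x v) \<sigma>)"

locale conn_graph =
  fixes V :: "'a set" and E :: "'a set set"
  assumes connected: "connected_graph V E"
begin

lemma finite_V: "finite V"
  using connected unfolding connected_graph_def graph_def by simp

lemma adj_commute: "adj E u v \<longleftrightarrow> adj E v u"
  unfolding adj_def by (simp add: insert_commute)

lemma not_adj_self: "\<not> adj E u u"
proof
  assume "adj E u u"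
  then have "{u} \<in> E" unfolding adj_def by simp
  then obtain a b where "a \<noteq> b" "{u} = {a, b}"
    using connected unfolding connected_graph_def graph_def by blast
  then show False by (metis insertCI singletonD)
qed

lemma adj_in_V: "adj E u v \<Longrightarrow> u \<in> V \<and> v \<in> V"
proof -
  assume "adj E u v"
  then have "{u, v} \<in> E" unfolding adj_def by simp
  then obtain a b where "a \<in> V" "b \<in> V" "{u, v} = {a, b}"
    using connected unfolding connected_graph_def graph_def by blast
  then show ?thesis by (metis doubleton_eq_iff)
qed

lemma ex_walk: "u \<in> V \<Longrightarrow> v \<in> V \<Longrightarrow> \<exists>p. is_walk V E p \<and> hd p = u \<and> last p = v"
  using connected unfolding connected_graph_def by blast

lemma ex_adj: "u \<in> V \<Longrightarrow> v \<in> V \<Longrightarrow> u \<noteq> v \<Longrightarrow> \<exists>w. adj E u w"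
proof -
  assume "u \<in> V" "v \<in> V" "u \<noteq> v"
  then obtain p where p: "is_walk V E p" "hd p = u" "last p = v" using ex_walk by blast
  then obtain x p' where "p = u # x # p'"
    using \<open>u \<noteq> v\<close> unfolding is_walk_def by (metis hd_Cons_tl last_ConsL list.exhaust_sel)
  then have "adj E (p ! 0) (p ! 1)" using p(1) unfolding is_walk_def by force
  then show ?thesis using \<open>p = u # x # p'\<close> by auto
qed

lemma closed_subset_eq_V:
  assumes "x \<in> S" "S \<subseteq> V" "\<And>a b. a \<in> S \<Longrightarrow> adj E a b \<Longrightarrow> b \<in> S"
  shows "S = V"
proof
  show "V \<subseteq> S"
  proof
    fix v assume "v \<in> V"
    then obtain p where p: "is_walk V E p" "hd p = x" "last p = v"
      using ex_walk assms(1,2) by blast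
    have "p ! i \<in> S" if "i < length p" for i
      using that
    proof (induction i)
      case 0
      then show ?case using p assms(1) by (simp add: hd_conv_nth)
    next
      case (Suc i)
      then have "adj E (p ! i) (p ! (i + 1))" using p(1) unfolding is_walk_def by auto
      then show ?case using Suc assms(3) by simp
    qed
    moreover have "p \<noteq> []" using p(1) unfolding is_walk_def by simp
    ultimately have "p ! (length p - 1) \<in> S" by simp
    then show "v \<in> S" using p(3) \<open>p \<noteq> []\<close> by (simp add: last_conv_nth)
  qed
qed (fact assms(2))

lemma ordering_nonempty: "ordering V \<sigma> \<Longrightarrow> \<sigma> \<noteq> []"
  using connected unfolding connected_graph_def ordering_def by auto

lemma ex_nbr_in_ordering: "ordering V \<sigma> \<Longrightarrow> v \<in> V \<Longrightarrow> v \<noteq> hd \<sigma> \<Longrightarrow> \<exists>x\<in>set \<sigma>. adj E x v"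
proof -
  assume o: "ordering V \<sigma>" and v: "v \<in> V" "v \<noteq> hd \<sigma>"
  have "hd \<sigma> \<in> V" using o ordering_nonempty[OF o] unfolding ordering_def by auto
  then obtain w where "adj E v w" using ex_adj v by blast
  then show ?thesis using o adj_in_V adj_commute unfolding ordering_def by blast
qed

lemma F_tree_eq_image:
  assumes o: "ordering V \<sigma>"
  shows "F_tree E \<sigma> = (\<lambda>v. {v, leftmost_nbr E \<sigma> v}) ` (V - {hd \<sigma>})"
proof -
  have ne: "\<sigma> \<noteq> []" using ordering_nonempty[OF o] .
  have d: "distinct \<sigma>" and sV: "set \<sigma> = V" using o unfolding ordering_def by auto
  have nonroot: "\<sigma> ! i \<noteq> hd \<sigma> \<longleftrightarrow> 0 < i" if "i < length \<sigma>" for i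
    using that d ne by (auto simp: hd_conv_nth nth_eq_iff_index_eq)
  have parent: "\<sigma> ! (LEAST j. j < length \<sigma> \<and> adj E (\<sigma> ! j) v) = leftmost_nbr E \<sigma> v"
    if "v \<in> V" "v \<noteq> hd \<sigma>" for v
    unfolding leftmost_nbr_def
    by (rule nth_Least_eq_hd_filter) (metis ex_nbr_in_ordering[OF o that] in_set_conv_nth)
  have "F_tree E \<sigma> = (\<lambda>i. {\<sigma> ! i, leftmost_nbr E \<sigma> (\<sigma> ! i)}) ` {i. 0 < i \<and> i < length \<sigma>}"
    unfolding F_tree_def using parent nonroot sV by (auto simp: image_def)
  also have "\<dots> = (\<lambda>v. {v, leftmost_nbr E \<sigma> v}) ` ((!) \<sigma> ` {i. 0 < i \<and> i < length \<sigma>})"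
    by (simp add: image_image)
  also have "(!) \<sigma> ` {i. 0 < i \<and> i < length \<sigma>} = V - {hd \<sigma>}"
    using nonroot sV by (auto simp: in_set_conv_nth image_def) (metis nth_mem)+
  finally show ?thesis .
qed

lemma bfs_run_distinct: "bfs_run V E \<sigma> Q \<Longrightarrow> distinct (\<sigma> @ Q) \<and> set (\<sigma> @ Q) \<subseteq> V \<and> \<sigma> @ Q \<noteq> []"
  by (induction rule: bfs_run.induct) auto

lemma bfs_run_closed: "bfs_run V E \<sigma> Q \<Longrightarrow> x \<in> set \<sigma> \<Longrightarrow> adj E x w \<Longrightarrow> w \<in> set (\<sigma> @ Q)"
proof (induction arbitrary: x rule: bfs_run.induct)
  case (start s)
  then show ?case by simp
next
  case (step \<sigma> v Q N)
  then show ?case using adj_in_V by (cases "x = v") auto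
qed

lemma bfs_ordering_if_run: "bfs_run V E \<sigma> [] \<Longrightarrow> bfs_ordering V E \<sigma>"
proof -
  assume r: "bfs_run V E \<sigma> []"
  have "set \<sigma> = V"
    by (rule closed_subset_eq_V[of "hd \<sigma>"]) (use bfs_run_distinct[OF r] bfs_run_closed[OF r] in auto)
  then show ?thesis unfolding bfs_ordering_def ordering_def using bfs_run_distinct[OF r] r by simp
qed

lemma bfs_run_step_prefix:
  assumes "bfs_run V E \<sigma> (v # Q)" and "distinct L"
    and "set L \<subseteq> {w \<in> V. adj E v w \<and> w \<notin> set \<sigma> \<and> w \<notin> set (v # Q)}"
  shows "\<exists>R. bfs_run V E (\<sigma> @ [v]) (Q @ L @ R) \<and>
    set R = {w \<in> V. adj E v w \<and> w \<notin> set \<sigma> \<and> w \<notin> set (v # Q)} - set L"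
proof -
  let ?N = "{w \<in> V. adj E v w \<and> w \<notin> set \<sigma> \<and> w \<notin> set (v # Q)}"
  obtain R where R: "distinct R" "set R = ?N - set L"
    using finite_distinct_list[of "?N - set L"] finite_V by auto
  have "bfs_run V E (\<sigma> @ [v]) (Q @ L @ R)"
    by (rule bfs_run.step) (use assms R in auto)
  then show ?thesis using R by blast
qed

lemma bfs_run_completes: "bfs_run V E \<sigma> Q \<Longrightarrow> \<exists>ys. bfs_ordering V E (\<sigma> @ Q @ ys)"
proof (induction "card V - length \<sigma>" arbitrary: \<sigma> Q rule: less_induct)
  case less
  show ?case
  proof (cases Q)
    case Nil
    then show ?thesis using less.prems by (intro exI[of _ "[]"]) (simp add: bfs_ordering_if_run)
  next
    case (Cons v Q')
    then obtain R where r: "bfs_run V E (\<sigma> @ [v]) (Q' @ R)"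
      using bfs_run_step_prefix[of \<sigma> v Q' "[]"] less.prems by auto
    have "distinct (\<sigma> @ [v])" "set (\<sigma> @ [v]) \<subseteq> V"
      using bfs_run_distinct[OF less.prems] Cons by auto
    then have "length (\<sigma> @ [v]) \<le> card V"
      by (metis distinct_card card_mono finite_V)
    then obtain ys where "bfs_ordering V E ((\<sigma> @ [v]) @ (Q' @ R) @ ys)"
      using less.hyps[OF _ r] by fastforce
    then show ?thesis using Cons by (intro exI[of _ "R @ ys"]) simp
  qed
qed

lemma bfs_run_nbrs_first:
  "bfs_run V E \<sigma> Q \<Longrightarrow> \<sigma> \<noteq> [] \<Longrightarrow>
   \<exists>N rest. \<sigma> @ Q = hd \<sigma> # N @ rest \<and> set N = {w \<in> V. adj E (hd \<sigma>) w}"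
proof (induction rule: bfs_run.induct)
  case (start s)
  then show ?case by simp
next
  case (step \<sigma> v Q N)
  show ?case
  proof (cases "\<sigma> = []")
    case True
    have "bfs_run V E [] (v # Q)" using step.hyps(1) True by simp
    then have "Q = []" by (cases rule: bfs_run.cases) auto
    then show ?thesis using True step.hyps(3) not_adj_self by auto
  next
    case False
    then obtain N1 rest where "\<sigma> @ v # Q = hd \<sigma> # N1 @ rest" "set N1 = {w \<in> V. adj E (hd \<sigma>) w}"
      using step.IH by blast
    then show ?thesis using False by (intro exI[of _ N1] exI[of _ "rest @ N"]) auto
  qed
qed

lemma bfs_ordering_front_loaded:
  assumes "bfs_ordering V E \<beta>"
  shows "front_loaded (adj E (hd \<beta>)) (tl \<beta>)"
proof -
  define s where "s = hd \<beta>"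
  have r: "bfs_run V E \<beta> []" and o: "ordering V \<beta>" using assms unfolding bfs_ordering_def by auto
  obtain N rest where \<beta>: "\<beta> = s # N @ rest" and N: "set N = {w \<in> V. adj E s w}"
    using bfs_run_nbrs_first[OF r ordering_nonempty[OF o]] unfolding s_def by auto
  have "distinct (N @ rest)" "set rest \<subseteq> V" using o unfolding \<beta> ordering_def by auto
  then have "\<forall>x\<in>set rest. \<not> adj E s x" using N by auto
  then show ?thesis using N unfolding \<beta> by (simp add: front_loaded_append)
qed

end

section \<open>Split graphs\<close>

definition nbr_indices :: "'a set set \<Rightarrow> 'a list \<Rightarrow> 'a \<Rightarrow> nat set" where
  "nbr_indices E p u = {j. j < length p \<and> adj E (p ! j) u}"

locale split_partition = conn_graph +
  fixes K I :: "'a set"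
  assumes partition: "K \<union> I = V" "K \<inter> I = {}"
    and clique: "clique E K" and independent: "independent E I"
begin

lemma clique_adj: "u \<in> K \<Longrightarrow> v \<in> K \<Longrightarrow> u \<noteq> v \<Longrightarrow> adj E u v"
  using clique unfolding clique_def by blast

lemma in_independent: "x \<in> V \<Longrightarrow> x \<notin> K \<Longrightarrow> x \<in> I"
  using partition by blast

lemma nbr_of_independent_in_clique: "u \<in> I \<Longrightarrow> adj E u v \<Longrightarrow> v \<in> K"
  using independent partition adj_in_V unfolding independent_def by blast

text \<open>From a start vertex in \<open>K\<close>, the searches may interleave its independent neighbours with
  the rest of \<open>K\<close>; only a start vertex in \<open>I\<close> constrains the ordering.\<close>

definition start_nbrs_first :: "'a \<Rightarrow> 'a list \<Rightarrow> bool" where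
  "start_nbrs_first s \<sigma> \<longleftrightarrow> ordering V \<sigma> \<and> hd \<sigma> = s \<and> (s \<notin> K \<longrightarrow> front_loaded (adj E s) (tl \<sigma>))"

lemma bfs_start_nbrs_first: "bfs_ordering V E \<beta> \<Longrightarrow> start_nbrs_first (hd \<beta>) \<beta>"
  using bfs_ordering_front_loaded unfolding start_nbrs_first_def bfs_ordering_def by blast

lemma start_nbrs_first_Cons:
  assumes "start_nbrs_first s \<sigma>"
  shows "\<sigma> = s # tl \<sigma>" and "s \<notin> set (tl \<sigma>)" and "s \<in> V"
proof -
  have o: "ordering V \<sigma>" and "hd \<sigma> = s" using assms unfolding start_nbrs_first_def by auto
  then show "\<sigma> = s # tl \<sigma>" using ordering_nonempty by auto
  then show "s \<notin> set (tl \<sigma>)" and "s \<in> V"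
    using o unfolding ordering_def by (metis distinct.simps(2), metis list.set_intros(1))
qed

lemma leftmost_nbr_in_clique:
  assumes \<sigma>: "start_nbrs_first s \<sigma>" and v: "v \<in> V" "v \<noteq> s"
  shows "leftmost_nbr E \<sigma> v \<in> insert s K"
proof -
  have o: "ordering V \<sigma>" "hd \<sigma> = s" using \<sigma> unfolding start_nbrs_first_def by auto
  define \<tau> where "\<tau> = tl \<sigma>"
  have \<sigma>\<tau>: "\<sigma> = s # \<tau>" using start_nbrs_first_Cons[OF \<sigma>] unfolding \<tau>_def by simp
  have "filter (\<lambda>x. adj E x v) \<sigma> \<noteq> []"
    using ex_nbr_in_ordering[OF o(1) v(1)] v(2) o(2) by (auto simp: filter_empty_conv)
  then have h: "adj E (leftmost_nbr E \<sigma> v) v"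
    unfolding leftmost_nbr_def using hd_in_set by fastforce
  show ?thesis
  proof (cases "v \<in> K")
    case False
    then show ?thesis using h v(1) in_independent nbr_of_independent_in_clique adj_commute by blast
  next
    case vK: True
    show ?thesis
    proof (cases "adj E s v")
      case True
      then show ?thesis unfolding leftmost_nbr_def \<sigma>\<tau> by simp
    next
      case False
      then have sI: "s \<in> I"
        using vK v clique_adj in_independent start_nbrs_first_Cons(3)[OF \<sigma>] by blast
      then have fl: "front_loaded (adj E s) \<tau>"
        using \<sigma> partition unfolding start_nbrs_first_def \<tau>_def by blast
      obtain w where "adj E s w" using ex_adj[of s v] v start_nbrs_first_Cons(3)[OF \<sigma>] by blast
      moreover have "w \<in> set \<tau>"
        using calculation o(1) not_adj_self adj_in_V unfolding \<sigma>\<tau> ordering_def by auto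
      ultimately have b: "adj E s (hd \<tau>)" using front_loaded_hd[OF fl] by blast
      have "\<tau> \<noteq> []" using \<open>w \<in> set \<tau>\<close> by auto
      then have "\<sigma> = s # hd \<tau> # tl \<tau>" unfolding \<sigma>\<tau> by simp
      moreover have "hd \<tau> \<in> K" using b sI nbr_of_independent_in_clique by blast
      moreover have "adj E (hd \<tau>) v" using clique_adj[OF _ vK] b False calculation(2) by blast
      ultimately show ?thesis using False unfolding leftmost_nbr_def by simp
    qed
  qed
qed

lemma F_tree_eq_if_clique_order_eq:
  assumes \<sigma>: "start_nbrs_first s \<sigma>" and \<tau>: "start_nbrs_first s \<tau>"
    and eq: "filter (\<lambda>x. x \<in> K) (tl \<sigma>) = filter (\<lambda>x. x \<in> K) (tl \<tau>)"
  shows "F_tree E \<sigma> = F_tree E \<tau>"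
proof -
  have via_trace: "leftmost_nbr E \<rho> v = hd (filter (\<lambda>x. adj E x v) (s # filter (\<lambda>x. x \<in> K) (tl \<rho>)))"
    if \<rho>: "start_nbrs_first s \<rho>" and v: "v \<in> V - {s}" for \<rho> v
  proof -
    have o: "ordering V \<rho>" "hd \<rho> = s" using \<rho> unfolding start_nbrs_first_def by auto
    have "filter (\<lambda>x. x \<in> insert s K) (tl \<rho>) = filter (\<lambda>x. x \<in> K) (tl \<rho>)"
      using start_nbrs_first_Cons(2)[OF \<rho>] by (auto intro: filter_cong)
    then have "filter (\<lambda>x. x \<in> insert s K) \<rho> = s # filter (\<lambda>x. x \<in> K) (tl \<rho>)"
      using start_nbrs_first_Cons(1)[OF \<rho>] by (metis filter.simps(2) insertI1)
    moreover have "leftmost_nbr E \<rho> v = hd (filter (\<lambda>x. adj E x v) (filter (\<lambda>x. x \<in> insert s K) \<rho>))"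
      unfolding leftmost_nbr_def
      by (rule hd_filter_filter[symmetric])
        (use ex_nbr_in_ordering[OF o(1)] o(2) v leftmost_nbr_in_clique[OF \<rho>]
          in \<open>auto simp: leftmost_nbr_def\<close>)
    ultimately show ?thesis by simp
  qed
  have "ordering V \<sigma>" "hd \<sigma> = s" "ordering V \<tau>" "hd \<tau> = s"
    using \<sigma> \<tau> unfolding start_nbrs_first_def by auto
  then show ?thesis
    unfolding F_tree_eq_image[OF \<open>ordering V \<sigma>\<close>] F_tree_eq_image[OF \<open>ordering V \<tau>\<close>]
    using via_trace[OF \<sigma>] via_trace[OF \<tau>] eq by (intro image_cong) auto
qed

definition clique_order :: "'a \<Rightarrow> 'a list \<Rightarrow> bool" where
  "clique_order s L \<longleftrightarrow> distinct L \<and> set L = K - {s} \<and> (s \<notin> K \<longrightarrow> front_loaded (adj E s) L)"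

lemma clique_order_of_start_nbrs_first:
  assumes "start_nbrs_first s \<sigma>"
  shows "clique_order s (filter (\<lambda>x. x \<in> K) (tl \<sigma>))"
proof -
  have "distinct \<sigma>" "set \<sigma> = V" using assms unfolding start_nbrs_first_def ordering_def by auto
  then have "distinct (tl \<sigma>)" "set (tl \<sigma>) = V - {s}"
    using start_nbrs_first_Cons[OF assms]
      by (metis distinct.simps(2), metis Diff_insert_absorb list.simps(15))
  then show ?thesis
    using assms partition front_loaded_filter unfolding clique_order_def start_nbrs_first_def
      by auto
qed

lemma filter_clique_append_eq:
  assumes "ordering V (s # xs @ ys)" "clique_order s L" "filter (\<lambda>x. x \<in> K) xs = L"
  shows "filter (\<lambda>x. x \<in> K) (xs @ ys) = L"
proof -
  have "y \<notin> K" if "y \<in> set ys" for y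
  proof
    assume "y \<in> K"
    moreover have "y \<noteq> s" using assms(1) that unfolding ordering_def by auto
    ultimately have "y \<in> set (filter (\<lambda>x. x \<in> K) xs)"
      using assms(2,3) unfolding clique_order_def by simp
    then have "y \<in> set xs" by simp
    then show False using assms(1) that unfolding ordering_def by auto
  qed
  then show ?thesis using assms(3) by (simp add: filter_empty_conv)
qed

lemma bfs_ordering_of_run:
  assumes "bfs_run V E (s # xs) Q" "clique_order s L" "filter (\<lambda>x. x \<in> K) (xs @ Q) = L"
  shows "\<exists>\<beta>. bfs_ordering V E \<beta> \<and> hd \<beta> = s \<and> filter (\<lambda>x. x \<in> K) (tl \<beta>) = L"
proof -
  obtain zs where \<beta>: "bfs_ordering V E ((s # xs) @ Q @ zs)"
    using bfs_run_completes[OF assms(1)] by blast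
  then have "filter (\<lambda>x. x \<in> K) ((xs @ Q) @ zs) = L"
    using filter_clique_append_eq[of s "xs @ Q" zs L] assms(2,3) unfolding bfs_ordering_def by simp
  then show ?thesis using \<beta> by (intro exI[of _ "s # xs @ Q @ zs"]) simp
qed

lemma bfs_run_first_layer:
  assumes s: "s \<in> V" and L: "clique_order s L"
  shows "\<exists>R. bfs_run V E [s] (filter (adj E s) L @ R) \<and> (\<forall>x\<in>set R. x \<notin> K) \<and> (s \<notin> K \<longrightarrow> R = [])"
proof -
  define L1 where "L1 = filter (adj E s) L"
  have dL: "distinct L" and setL: "set L = K - {s}" using L unfolding clique_order_def by auto
  have nbr_K: "w \<in> set L1" if "adj E s w" "w \<in> K" for w
  proof -
    have "w \<noteq> s" using that(1) not_adj_self by blast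
    then show ?thesis using that setL unfolding L1_def by auto
  qed
  obtain R where r: "bfs_run V E ([] @ [s]) ([] @ L1 @ R)"
    and R: "set R = {w \<in> V. adj E s w \<and> w \<notin> set [] \<and> w \<notin> set [s]} - set L1"
    using bfs_run_step_prefix[OF bfs_run.start[OF s], of L1] dL setL adj_in_V
    unfolding L1_def by (force simp: filter_set)
  have "\<forall>x\<in>set R. x \<notin> K" using R nbr_K by auto
  moreover have "set R = {}" if "s \<notin> K"
    using R nbr_K nbr_of_independent_in_clique[OF in_independent[OF s that]] by auto
  ultimately show ?thesis using r unfolding L1_def by auto
qed

lemma bfs_run_second_layer:
  assumes sK: "s \<notin> K" and L: "clique_order s L"
    and r: "bfs_run V E [s] (a # L1')" and a: "filter (adj E s) L = a # L1'"
  shows "\<exists>R. bfs_run V E [s, a] (L1' @ filter (\<lambda>x. \<not> adj E s x) L @ R) \<and> (\<forall>x\<in>set R. x \<notin> K)"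
proof -
  define L2 where "L2 = filter (\<lambda>x. \<not> adj E s x) L"
  have dL: "distinct L" and setL: "set L = K - {s}" using L unfolding clique_order_def by auto
  have "a \<in> set (filter (adj E s) L)" using a by simp
  then have aK: "a \<in> K" "adj E s a" using setL by auto
  have new: "set L2 \<subseteq> {w \<in> V. adj E a w \<and> w \<notin> set [s] \<and> w \<notin> set (a # L1')}"
  proof
    fix w assume "w \<in> set L2"
    then have w: "w \<in> K" "w \<noteq> s" "\<not> adj E s w" using setL unfolding L2_def by auto
    then have "w \<notin> set (a # L1')" unfolding a[symmetric] by simp
    then show "w \<in> {w \<in> V. adj E a w \<and> w \<notin> set [s] \<and> w \<notin> set (a # L1')}"
      using w clique_adj[OF aK(1)] partition by auto
  qed
  obtain R where r2: "bfs_run V E ([s] @ [a]) (L1' @ L2 @ R)"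
    and R: "set R = {w \<in> V. adj E a w \<and> w \<notin> set [s] \<and> w \<notin> set (a # L1')} - set L2"
    using bfs_run_step_prefix[OF r _ new] dL unfolding L2_def by auto
  have "x \<notin> K" if "x \<in> set R" for x
  proof -
    have "x \<noteq> s" "x \<notin> set (filter (adj E s) L)" "x \<notin> set L2" using that R unfolding a by auto
    then show ?thesis using setL unfolding L2_def by auto
  qed
  then show ?thesis using r2 unfolding L2_def by auto
qed

text \<open>BFS pops \<open>s\<close> and enqueues the neighbours of \<open>s\<close> in the order of \<open>L\<close>. If \<open>s \<in> I\<close>, these
  all lie in \<open>K\<close>, and popping the first of them enqueues the rest of \<open>K\<close> in the order of \<open>L\<close>.\<close>

lemma bfs_of_clique_order:
  assumes s: "s \<in> V" and L: "clique_order s L"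
  shows "\<exists>\<beta>. bfs_ordering V E \<beta> \<and> hd \<beta> = s \<and> filter (\<lambda>x. x \<in> K) (tl \<beta>) = L"
proof -
  define L1 L2 where "L1 = filter (adj E s) L" and "L2 = filter (\<lambda>x. \<not> adj E s x) L"
  have setL: "set L = K - {s}" using L unfolding clique_order_def by blast
  have L_split: "L = L1 @ L2"
  proof (cases "s \<in> K")
    case True
    then have "\<forall>x\<in>set L. adj E s x" using setL clique_adj by auto
    then show ?thesis unfolding L1_def L2_def by (simp add: filter_id_conv filter_empty_conv)
  next
    case False
    then show ?thesis using L unfolding clique_order_def front_loaded_def L1_def L2_def by blast
  qed
  have L_K: "filter (\<lambda>x. x \<in> K) (L1 @ L2) = L"
    unfolding L_split[symmetric] by (rule filter_True) (use setL in auto)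
  obtain R1 where r1: "bfs_run V E [s] (L1 @ R1)" and R1: "\<forall>x\<in>set R1. x \<notin> K" "s \<notin> K \<longrightarrow> R1 = []"
    using bfs_run_first_layer[OF s L] unfolding L1_def by blast
  show ?thesis
  proof (cases "L2 = []")
    case True
    have "filter (\<lambda>x. x \<in> K) R1 = []" unfolding filter_empty_conv using R1(1) by blast
    then have "filter (\<lambda>x. x \<in> K) (L1 @ R1) = L" using L_K True by simp
    then show ?thesis using bfs_ordering_of_run[OF _ L, of "[]" "L1 @ R1"] r1 by simp
  next
    case False
    then obtain v where v: "v \<in> set L2" by (cases L2) auto
    then have sK: "s \<notin> K" using clique_adj setL unfolding L2_def by auto
    have "v \<in> V" "v \<noteq> s" using v setL partition unfolding L2_def by auto
    then obtain a0 where "adj E s a0" using ex_adj s by blast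
    then have "a0 \<in> set L1"
      using nbr_of_independent_in_clique[OF in_independent[OF s sK]] not_adj_self setL
      unfolding L1_def by auto
    then obtain a L1' where a: "L1 = a # L1'" by (cases L1) auto
    then have "bfs_run V E [s] (a # L1')" using r1 R1(2) sK by simp
    then obtain R2 where r2: "bfs_run V E [s, a] (L1' @ L2 @ R2)" and R2: "\<forall>x\<in>set R2. x \<notin> K"
      using bfs_run_second_layer[OF sK L] a unfolding L1_def L2_def by blast
    have "filter (\<lambda>x. x \<in> K) R2 = []" unfolding filter_empty_conv using R2 by blast
    then have "filter (\<lambda>x. x \<in> K) (L1 @ L2 @ R2) = L" using L_K by simp
    then show ?thesis using bfs_ordering_of_run[OF _ L, of "[a]" "L1' @ L2 @ R2"] r2 a by simp
  qed
qed

lemma nbr_indices_psubset_if_start_independent: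
  assumes o: "ordering V \<sigma>" and s0: "\<sigma> ! 0 = s" and sI: "s \<in> I"
    and ij: "0 < i" "i < j" "j < length \<sigma>"
    and adj_j: "adj E s (\<sigma> ! j)" and nadj_i: "\<not> adj E s (\<sigma> ! i)"
    and earlier: "\<And>k. 0 < k \<Longrightarrow> k < i \<Longrightarrow> adj E s (\<sigma> ! k)"
  shows "nbr_indices E (take i \<sigma>) (\<sigma> ! i) \<subset> nbr_indices E (take i \<sigma>) (\<sigma> ! j)"
proof
  have d: "distinct \<sigma>" using o unfolding ordering_def by simp
  have jK: "\<sigma> ! j \<in> K" using adj_j sI nbr_of_independent_in_clique by blast
  show "nbr_indices E (take i \<sigma>) (\<sigma> ! i) \<subseteq> nbr_indices E (take i \<sigma>) (\<sigma> ! j)"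
  proof
    fix k assume "k \<in> nbr_indices E (take i \<sigma>) (\<sigma> ! i)"
    then have k: "k < i" "adj E (\<sigma> ! k) (\<sigma> ! i)" unfolding nbr_indices_def by auto
    then have "k \<noteq> 0" using nadj_i s0 by (cases k) auto
    then have "adj E s (\<sigma> ! k)" using earlier k(1) by simp
    then have "\<sigma> ! k \<in> K" using sI nbr_of_independent_in_clique by blast
    moreover have "\<sigma> ! k \<noteq> \<sigma> ! j" using k(1) ij d by (simp add: nth_eq_iff_index_eq)
    ultimately show "k \<in> nbr_indices E (take i \<sigma>) (\<sigma> ! j)"
      using clique_adj[OF _ jK] k(1) ij unfolding nbr_indices_def by simp
  qed
  have "0 \<in> nbr_indices E (take i \<sigma>) (\<sigma> ! j)" "0 \<notin> nbr_indices E (take i \<sigma>) (\<sigma> ! i)"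
    using ij adj_j nadj_i s0 unfolding nbr_indices_def by auto
  then show "nbr_indices E (take i \<sigma>) (\<sigma> ! i) \<noteq> nbr_indices E (take i \<sigma>) (\<sigma> ! j)" by blast
qed

lemma nbr_indices_subset_if_clique_order:
  assumes s: "s \<in> V" and L: "clique_order s L" and j: "j < length L"
    and u: "u \<notin> set (s # take j L)"
  shows "nbr_indices E (s # take j L) u \<subseteq> nbr_indices E (s # take j L) (L ! j)"
proof
  have dL: "distinct L" and setL: "set L = K - {s}" using L unfolding clique_order_def by auto
  have "L ! j \<in> set L" using j by simp
  then have wK: "L ! j \<in> K" using setL by blast
  fix k assume "k \<in> nbr_indices E (s # take j L) u"
  then have k: "k < Suc j" "adj E ((s # take j L) ! k) u" using j unfolding nbr_indices_def by auto
  have "adj E ((s # take j L) ! k) (L ! j)"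
  proof (cases k)
    case (Suc k')
    then have pk: "(s # take j L) ! k = L ! k'" and "k' < j" using k(1) by auto
    then have "L ! k' \<in> set L" using j by simp
    moreover have "L ! k' \<noteq> L ! j" using \<open>k' < j\<close> j dL by (simp add: nth_eq_iff_index_eq)
    ultimately show ?thesis using clique_adj wK setL pk by auto
  next
    case 0
    then have su: "adj E s u" using k by simp
    have "adj E s (L ! j)"
    proof (cases "s \<in> K")
      case True
      then show ?thesis using clique_adj wK setL \<open>L ! j \<in> set L\<close> by blast
    next
      case False
      then have fl: "front_loaded (adj E s) L" using L unfolding clique_order_def by blast
      have "u \<in> set L"
        using su False s in_independent nbr_of_independent_in_clique setL u by auto
      then obtain m where m: "m < length L" "L ! m = u" unfolding in_set_conv_nth by blast
      have "j \<le> m"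
      proof (rule ccontr)
        assume "\<not> j \<le> m"
        then have "take j L ! m = u" "m < length (take j L)" using m by simp_all
        then have "u \<in> set (take j L)" by (metis nth_mem)
        then show False using u by simp
      qed
      then show ?thesis using front_loaded_nth[OF fl, of j m] m su by (cases "m = j") auto
    qed
    then show ?thesis using 0 by simp
  qed
  then show "k \<in> nbr_indices E (s # take j L) (L ! j)"
    using k(1) j unfolding nbr_indices_def by simp
qed

end

section \<open>Searches that compare numbered neighbourhoods\<close>

text \<open>\<open>better s p u w\<close>: with start vertex \<open>s\<close> and numbered prefix \<open>p\<close>, the unnumbered vertex
  \<open>u\<close> is strictly preferred to \<open>w\<close>. The start vertex, which carries an extra label, is exempt
  from the two comparison axioms. The bound on \<open>length p\<close> is needed for LBFS, whose labels
  \<open>card V - (j + 1)\<close> would otherwise be truncated to \<open>0\<close>.\<close>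

locale search_rule =
  fixes V :: "'a set" and E :: "'a set set"
    and better :: "'a \<Rightarrow> 'a list \<Rightarrow> 'a \<Rightarrow> 'a \<Rightarrow> bool"
  assumes better_irrefl: "\<not> better s p u u"
    and better_trans: "better s p u v \<Longrightarrow> better s p v w \<Longrightarrow> better s p u w"
    and start_unbeaten: "\<not> better s [] u s"
    and better_if_nbr_indices_psubset: "u \<noteq> s \<Longrightarrow> w \<noteq> s \<Longrightarrow> length p < card V \<Longrightarrow>
       nbr_indices E p w \<subset> nbr_indices E p u \<Longrightarrow> better s p u w"
    and not_better_if_nbr_indices_subset: "u \<noteq> s \<Longrightarrow> w \<noteq> s \<Longrightarrow> length p < card V \<Longrightarrow>
       nbr_indices E p u \<subseteq> nbr_indices E p w \<Longrightarrow> \<not> better s p u w"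

locale split_search = split_partition + search_rule
begin

lemma search_adj_start_mono:
  assumes so: "search_ordering V (better s) \<sigma>" and hd: "hd \<sigma> = s" and sI: "s \<in> I"
  shows "0 < i \<Longrightarrow> i < j \<Longrightarrow> j < length \<sigma> \<Longrightarrow> adj E s (\<sigma> ! j) \<Longrightarrow> adj E s (\<sigma> ! i)"
proof (induction i rule: less_induct)
  case (less i)
  have o: "ordering V \<sigma>"
    and valid: "\<forall>i<length \<sigma>. \<forall>u\<in>V - set (take i \<sigma>). \<not> better s (take i \<sigma>) u (\<sigma> ! i)"
    using so unfolding search_ordering_def by auto
  have d: "distinct \<sigma>" and sV: "set \<sigma> = V" using o unfolding ordering_def by auto
  have s0: "\<sigma> ! 0 = s" using hd ordering_nonempty[OF o] by (simp add: hd_conv_nth)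
  have i: "i < length \<sigma>" "0 < length \<sigma>" using less.prems(2,3) by auto
  show ?case
  proof (rule ccontr)
    assume nadj: "\<not> adj E s (\<sigma> ! i)"
    have "better s (take i \<sigma>) (\<sigma> ! j) (\<sigma> ! i)"
    proof (rule better_if_nbr_indices_psubset)
      show "\<sigma> ! j \<noteq> s" using less.prems(4) not_adj_self by blast
      show "\<sigma> ! i \<noteq> s" using i less.prems(1) d s0[symmetric] by (simp add: nth_eq_iff_index_eq)
      show "length (take i \<sigma>) < card V" using i distinct_card[OF d] sV by simp
      show "nbr_indices E (take i \<sigma>) (\<sigma> ! i) \<subset> nbr_indices E (take i \<sigma>) (\<sigma> ! j)"
        by (rule nbr_indices_psubset_if_start_independent[OF o s0 sI less.prems(1-4) nadj])
          (use less.IH less.prems in auto)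
    qed
    moreover have "\<sigma> ! j \<notin> set (take i \<sigma>)"
    proof
      assume "\<sigma> ! j \<in> set (take i \<sigma>)"
      then obtain k where "k < length (take i \<sigma>)" "take i \<sigma> ! k = \<sigma> ! j" unfolding in_set_conv_nth
        by blast
      then show False using less.prems(2,3) d by (simp add: nth_eq_iff_index_eq)
    qed
    ultimately show False using valid i(1) less.prems(3) sV by auto
  qed
qed

lemma search_start_nbrs_first:
  assumes so: "search_ordering V (better s) \<sigma>" and hd: "hd \<sigma> = s"
  shows "start_nbrs_first s \<sigma>"
proof -
  have o: "ordering V \<sigma>" using so unfolding search_ordering_def by simp
  have "s \<in> V" using hd o ordering_nonempty[OF o] unfolding ordering_def by auto
  have "front_loaded (adj E s) (tl \<sigma>)" if "s \<notin> K"
  proof (rule front_loaded_if_nth)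
    fix i j assume "i < j" "j < length (tl \<sigma>)" "adj E s (tl \<sigma> ! j)"
    then show "adj E s (tl \<sigma> ! i)"
      using search_adj_start_mono[OF so hd in_independent[OF \<open>s \<in> V\<close> that], of "Suc i" "Suc j"]
      by (simp add: nth_tl)
  qed
  then show ?thesis using o hd unfolding start_nbrs_first_def by blast
qed

lemma search_prefix_of_clique_order:
  assumes s: "s \<in> V" and L: "clique_order s L"
  shows "search_prefix V (better s) (s # L)"
proof -
  have dP: "distinct (s # L)" and setL: "set L = K - {s}" using L unfolding clique_order_def by auto
  have PV: "set (s # L) \<subseteq> V" using s setL partition by auto
  then have lenP: "length (s # L) \<le> card V" using dP by (metis distinct_card card_mono finite_V)
  have "\<not> better s (take i (s # L)) u ((s # L) ! i)"
    if i: "i < length (s # L)" and u: "u \<in> V - set (take i (s # L))" for i u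
  proof (cases i)
    case 0
    then show ?thesis using start_unbeaten by simp
  next
    case (Suc j)
    then have p: "take i (s # L) = s # take j L" and w: "(s # L) ! i = L ! j" "j < length L"
      using i by auto
    have u': "u \<notin> set (s # take j L)" and "u \<noteq> s" using u unfolding p by auto
    have "L ! j \<in> set L" using w(2) by simp
    then have "L ! j \<noteq> s" using setL by blast
    have "length (s # take j L) < card V" using i lenP unfolding p[symmetric] by simp
    then have "\<not> better s (s # take j L) u (L ! j)"
      using not_better_if_nbr_indices_subset \<open>u \<noteq> s\<close> \<open>L ! j \<noteq> s\<close>
        nbr_indices_subset_if_clique_order[OF s L w(2) u'] by blast
    then show ?thesis unfolding p w(1) .
  qed
  then show ?thesis unfolding search_prefix_def using dP PV by blast
qed

lemma bfs_tree_iff_search_tree: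
  "(\<exists>\<beta>. bfs_ordering V E \<beta> \<and> F_tree E \<beta> = T) \<longleftrightarrow>
   (\<exists>\<sigma>. (\<exists>s\<in>V. search_ordering V (better s) \<sigma> \<and> hd \<sigma> = s) \<and> F_tree E \<sigma> = T)"
proof
  assume "\<exists>\<beta>. bfs_ordering V E \<beta> \<and> F_tree E \<beta> = T"
  then obtain \<beta> where \<beta>: "bfs_ordering V E \<beta>" "F_tree E \<beta> = T" by blast
  define s L where "s = hd \<beta>" and "L = filter (\<lambda>x. x \<in> K) (tl \<beta>)"
  have nf\<beta>: "start_nbrs_first s \<beta>" using bfs_start_nbrs_first[OF \<beta>(1)] unfolding s_def .
  have L: "clique_order s L" using clique_order_of_start_nbrs_first[OF nf\<beta>] unfolding L_def .
  have s: "s \<in> V" using start_nbrs_first_Cons(3)[OF nf\<beta>] .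
  have "\<exists>ys. search_ordering V (better s) ((s # L) @ ys)"
    using search_prefix_extends[OF finite_V _ _ search_prefix_of_clique_order[OF s L]]
      better_irrefl better_trans by blast
  then obtain ys where \<sigma>: "search_ordering V (better s) (s # L @ ys)" by auto
  have nf\<sigma>: "start_nbrs_first s (s # L @ ys)" using search_start_nbrs_first[OF \<sigma>] by simp
  have "filter (\<lambda>x. x \<in> K) L = L" unfolding L_def by simp
  then have "filter (\<lambda>x. x \<in> K) (L @ ys) = L"
    using filter_clique_append_eq[of s L ys, OF _ L] \<sigma> unfolding search_ordering_def by simp
  then have "F_tree E (s # L @ ys) = T"
    using F_tree_eq_if_clique_order_eq[OF nf\<sigma> nf\<beta>] \<beta>(2) unfolding L_def by simp
  then show "\<exists>\<sigma>. (\<exists>s\<in>V. search_ordering V (better s) \<sigma> \<and> hd \<sigma> = s) \<and> F_tree E \<sigma> = T"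
    using \<sigma> s by (intro exI[of _ "s # L @ ys"]) auto
next
  assume "\<exists>\<sigma>. (\<exists>s\<in>V. search_ordering V (better s) \<sigma> \<and> hd \<sigma> = s) \<and> F_tree E \<sigma> = T"
  then obtain \<sigma> s where s: "s \<in> V"
    and \<sigma>: "search_ordering V (better s) \<sigma>" "hd \<sigma> = s" "F_tree E \<sigma> = T"
    by blast
  have nf\<sigma>: "start_nbrs_first s \<sigma>" using search_start_nbrs_first[OF \<sigma>(1,2)] .
  obtain \<beta> where \<beta>: "bfs_ordering V E \<beta>" "hd \<beta> = s"
    and trace: "filter (\<lambda>x. x \<in> K) (tl \<beta>) = filter (\<lambda>x. x \<in> K) (tl \<sigma>)"
    using bfs_of_clique_order[OF s clique_order_of_start_nbrs_first[OF nf\<sigma>]] by blast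
  have "start_nbrs_first s \<beta>" using bfs_start_nbrs_first[OF \<beta>(1)] \<beta>(2) by simp
  then show "\<exists>\<beta>. bfs_ordering V E \<beta> \<and> F_tree E \<beta> = T"
    using F_tree_eq_if_clique_order_eq[OF _ nf\<sigma> trace] \<beta>(1) \<sigma>(3) by blast
qed

end

section \<open>MNS, MCS, LBFS and LDFS\<close>

lemma lex_label_mono:
  assumes sorted: "sorted_wrt (\<lambda>a b. f b < f a) xs" and xs: "set xs = {..<length p}"
  shows "nbr_indices E p w \<subset> nbr_indices E p u \<Longrightarrow>
      lex_less (map f (filter (\<lambda>j. adj E (p ! j) w) xs)) (map f (filter (\<lambda>j. adj E (p ! j) u) xs))"
    and "nbr_indices E p u \<subseteq> nbr_indices E p w \<Longrightarrow>
      \<not> lex_less (map f (filter (\<lambda>j. adj E (p ! j) w) xs)) (map f (filter (\<lambda>j. adj E (p ! j) u) xs))"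
proof -
  assume "nbr_indices E p w \<subset> nbr_indices E p u"
  then show "lex_less (map f (filter (\<lambda>j. adj E (p ! j) w) xs))
      (map f (filter (\<lambda>j. adj E (p ! j) u) xs))"
    by (intro lex_less_map_filter[OF sorted]) (auto simp: xs nbr_indices_def)
next
  assume "nbr_indices E p u \<subseteq> nbr_indices E p w"
  then show "\<not> lex_less (map f (filter (\<lambda>j. adj E (p ! j) w) xs))
      (map f (filter (\<lambda>j. adj E (p ! j) u) xs))"
    by (intro not_lex_less_map_filter[OF sorted]) (auto simp: xs nbr_indices_def)
qed

lemma search_rule_mns:
  "search_rule V E (\<lambda>s p u w. mns_label E (card V) s p w \<subset> mns_label E (card V) s p u)"
proof
  fix s p u w
  have label: "mns_label E (card V) s p x = Suc ` nbr_indices E p x" if "x \<noteq> s" for x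
    using that unfolding mns_label_def nbr_indices_def by auto
  show "\<not> mns_label E (card V) s [] s \<subset> mns_label E (card V) s [] u"
    unfolding mns_label_def by auto
  show "mns_label E (card V) s p w \<subset> mns_label E (card V) s p u"
    if "u \<noteq> s" "w \<noteq> s" "nbr_indices E p w \<subset> nbr_indices E p u"
    using that label by (simp add: image_strict_mono)
  show "\<not> mns_label E (card V) s p w \<subset> mns_label E (card V) s p u"
    if "u \<noteq> s" "w \<noteq> s" "nbr_indices E p u \<subseteq> nbr_indices E p w"
    using that label by auto
qed auto

lemma search_rule_mcs: "search_rule V E (\<lambda>s p u w. mcs_count E p w < mcs_count E p u)"
proof
  fix s p u w
  have count: "mcs_count E p x = card (nbr_indices E p x)" for x
    unfolding mcs_count_def nbr_indices_def ..
  have fin: "finite (nbr_indices E p x)" for x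
    unfolding nbr_indices_def by simp
  show "\<not> mcs_count E [] s < mcs_count E [] u" unfolding mcs_count_def by simp
  show "mcs_count E p w < mcs_count E p u" if "nbr_indices E p w \<subset> nbr_indices E p u"
    using psubset_card_mono[OF fin that] count by simp
  show "\<not> mcs_count E p w < mcs_count E p u" if "nbr_indices E p u \<subseteq> nbr_indices E p w"
    using card_mono[OF fin that] count by simp
qed auto

lemma search_rule_lbfs:
  "search_rule V E (\<lambda>s p u w. lex_less (lbfs_label E (card V) s p w) (lbfs_label E (card V) s p u))"
proof
  fix s p u w
  have label: "lbfs_label E n s p x =
      map (\<lambda>j. n - (j + 1)) (filter (\<lambda>j. adj E (p ! j) x) [0..<length p])"
    if "x \<noteq> s" for x n
    using that unfolding lbfs_label_def concat_map_if_singleton by simp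
  have sorted: "sorted_wrt (\<lambda>a b. card V - (b + 1) < card V - (a + 1)) [0..<length p]"
    if "length p < card V"
    using that by (intro sorted_wrt_mono_rel[OF _ sorted_wrt_upt]) auto
  show "\<not> lex_less (lbfs_label E (card V) s [] s) (lbfs_label E (card V) s [] u)"
    unfolding lbfs_label_def lex_less_def by auto
  show "lex_less (lbfs_label E (card V) s p w) (lbfs_label E (card V) s p u)"
    if "u \<noteq> s" "w \<noteq> s" "length p < card V" "nbr_indices E p w \<subset> nbr_indices E p u"
    unfolding label[OF that(1)] label[OF that(2)]
    by (rule lex_label_mono(1)[OF sorted[OF that(3)] _ that(4)]) auto
  show "\<not> lex_less (lbfs_label E (card V) s p w) (lbfs_label E (card V) s p u)"
    if "u \<noteq> s" "w \<noteq> s" "length p < card V" "nbr_indices E p u \<subseteq> nbr_indices E p w"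
    unfolding label[OF that(1)] label[OF that(2)]
    by (rule lex_label_mono(2)[OF sorted[OF that(3)] _ that(4)]) auto
qed (auto simp: lex_less_irrefl elim: lex_less_trans)

lemma search_rule_ldfs:
  "search_rule V E (\<lambda>s p u w. lex_less (ldfs_label E s p w) (ldfs_label E s p u))"
proof
  fix s p u w
  have label: "ldfs_label E s p x =
      map (\<lambda>j. j + 1) (filter (\<lambda>j. adj E (p ! j) x) (rev [0..<length p]))"
    if "x \<noteq> s" for x
    using that unfolding ldfs_label_def concat_map_if_singleton by simp
  have sorted: "sorted_wrt (\<lambda>a b. b + 1 < a + (1::nat)) (rev [0..<length p])"
    unfolding sorted_wrt_rev by (intro sorted_wrt_mono_rel[OF _ sorted_wrt_upt]) auto
  show "\<not> lex_less (ldfs_label E s [] s) (ldfs_label E s [] u)"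
    unfolding ldfs_label_def lex_less_def by auto
  show "lex_less (ldfs_label E s p w) (ldfs_label E s p u)"
    if "u \<noteq> s" "w \<noteq> s" "nbr_indices E p w \<subset> nbr_indices E p u"
    unfolding label[OF that(1)] label[OF that(2)]
    by (rule lex_label_mono(1)[OF sorted _ that(3)]) auto
  show "\<not> lex_less (ldfs_label E s p w) (ldfs_label E s p u)"
    if "u \<noteq> s" "w \<noteq> s" "nbr_indices E p u \<subseteq> nbr_indices E p w"
    unfolding label[OF that(1)] label[OF that(2)]
    by (rule lex_label_mono(2)[OF sorted _ that(3)]) auto
qed (auto simp: lex_less_irrefl elim: lex_less_trans)

lemma mns_ordering_iff:
  "mns_ordering V E \<sigma> \<longleftrightarrow> (\<exists>s\<in>V.
     search_ordering V (\<lambda>p u w. mns_label E (card V) s p w \<subset> mns_label E (card V) s p u) \<sigma> \<and> hd \<sigma> = s)"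
proof -
  have "hd \<sigma> = s"
    if "s \<in> V" "search_ordering V (\<lambda>p u w. mns_label E (card V) s p w \<subset> mns_label E (card V) s p u) \<sigma>" for s
    by (rule search_ordering_hd[OF that(2,1)]) (auto simp: mns_label_def)
  then show ?thesis unfolding mns_ordering_def by blast
qed

lemma mcs_ordering_iff:
  assumes "V \<noteq> {}"
  shows "mcs_ordering V E \<sigma> \<longleftrightarrow>
    (\<exists>s\<in>V. search_ordering V (\<lambda>p u w. mcs_count E p w < mcs_count E p u) \<sigma> \<and> hd \<sigma> = s)"
proof -
  have "hd \<sigma> \<in> V" if "ordering V \<sigma>"
    using that assms unfolding ordering_def by (metis hd_in_set set_empty)
  then show ?thesis unfolding mcs_ordering_def search_ordering_def by blast
qed

lemma lbfs_ordering_iff: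
  "lbfs_ordering V E \<sigma> \<longleftrightarrow> (\<exists>s\<in>V. search_ordering V
     (\<lambda>p u w. lex_less (lbfs_label E (card V) s p w) (lbfs_label E (card V) s p u)) \<sigma> \<and> hd \<sigma> = s)"
proof -
  have "hd \<sigma> = s" if "s \<in> V" "search_ordering V
     (\<lambda>p u w. lex_less (lbfs_label E (card V) s p w) (lbfs_label E (card V) s p u)) \<sigma>" for s
    by (rule search_ordering_hd[OF that(2,1)]) (auto simp: lbfs_label_def lex_less_def)
  then show ?thesis unfolding lbfs_ordering_def by blast
qed

lemma ldfs_ordering_iff:
  "ldfs_ordering V E \<sigma> \<longleftrightarrow> (\<exists>s\<in>V. search_ordering V
     (\<lambda>p u w. lex_less (ldfs_label E s p w) (ldfs_label E s p u)) \<sigma> \<and> hd \<sigma> = s)"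
proof -
  have "hd \<sigma> = s" if "s \<in> V" "search_ordering V
     (\<lambda>p u w. lex_less (ldfs_label E s p w) (ldfs_label E s p u)) \<sigma>" for s
    by (rule search_ordering_hd[OF that(2,1)]) (auto simp: ldfs_label_def lex_less_def)
  then show ?thesis unfolding ldfs_ordering_def by blast
qed

theorem theorem4:
  fixes V :: "'a set" and E T :: "'a set set"
  assumes "connected_graph V E" and "split_graph V E" and "spanning_tree V E T"
  shows "((\<exists>\<sigma>. bfs_ordering V E \<sigma> \<and> F_tree E \<sigma> = T) \<longleftrightarrow> (\<exists>\<sigma>. mns_ordering V E \<sigma> \<and> F_tree E \<sigma> = T))
       \<and> ((\<exists>\<sigma>. bfs_ordering V E \<sigma> \<and> F_tree E \<sigma> = T) \<longleftrightarrow> (\<exists>\<sigma>. mcs_ordering V E \<sigma> \<and> F_tree E \<sigma> = T))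
       \<and> ((\<exists>\<sigma>. bfs_ordering V E \<sigma> \<and> F_tree E \<sigma> = T) \<longleftrightarrow> (\<exists>\<sigma>. lbfs_ordering V E \<sigma> \<and> F_tree E \<sigma> = T))
       \<and> ((\<exists>\<sigma>. bfs_ordering V E \<sigma> \<and> F_tree E \<sigma> = T) \<longleftrightarrow> (\<exists>\<sigma>. ldfs_ordering V E \<sigma> \<and> F_tree E \<sigma> = T))"
proof -
  obtain K I where "K \<union> I = V" "K \<inter> I = {}" "clique E K" "independent E I"
    using assms(2) unfolding split_graph_def by blast
  then have split: "split_partition V E K I"
    using assms(1) by unfold_locales
  have "V \<noteq> {}" using assms(1) unfolding connected_graph_def by simp
  note bfs_tree_iff = split_search.bfs_tree_iff_search_tree[OF split_search.intro[OF split], of _ T]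
  show ?thesis
    unfolding mns_ordering_iff mcs_ordering_iff[OF \<open>V \<noteq> {}\<close>] lbfs_ordering_iff ldfs_ordering_iff
    using bfs_tree_iff[OF search_rule_mns] bfs_tree_iff[OF search_rule_mcs]
      bfs_tree_iff[OF search_rule_lbfs] bfs_tree_iff[OF search_rule_ldfs]
    by blast
qed

end
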